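(* Let $\mathbf{Z}\in\mathbb{R}^{n\times d}$ and $\lambda\geq 0$, and assume that $\lambda>0$ or that $\mathbf{Z}$ has full column rank. Let $s_{\lambda}(\mathbf{Z}):=\mathrm{Tr}\big((\mathbf{Z}^{T}\mathbf{Z}+\lambda\mathbf{I}_d)^{-1}\mathbf{Z}^{T}\mathbf{Z}\big)$. Let $\delta\in(0,1)$ and let $\mathbf{S}\in\mathbb{R}^{s\times n}$ be a CountSketch matrix with $s\geq 20\,s_{\lambda}(\mathbf{Z})^{2}/\delta$. Then with probability at least $1-\delta$, all generalized eigenvalues of the pencil $(\mathbf{Z}^{T}\mathbf{Z}+\lambda\mathbf{I}_d,\ \mathbf{Z}^{T}\mathbf{S}^{T}\mathbf{S}\mathbf{Z}+\lambda\mathbf{I}_d)$ lie in the interval $[1/2,3/2]$, and $\kappa(\mathbf{Z}^{T}\mathbf{Z}+\lambda\mathbf{I}_d,\ \mathbf{Z}^{T}\mathbf{S}^{T}\mathbf{S}\mathbf{Z}+\lambda\mathbf{I}_d)\leq 3$.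
   Context: A CountSketch matrix $\mathbf{S}\in\mathbb{R}^{s\times n}$ is defined by a random hash function $h:\{1,\dots,n\}\to\{1,\dots,s\}$ and a random sign function $g:\{1,\dots,n\}\to\{-1,+1\}$: the $j$-th column of $\mathbf{S}$ has a single nonzero entry, equal to $g(j)$, in row $h(j)$; equivalently $(\mathbf{S}\mathbf{x})_i=\sum_{j:h(j)=i}g(j)x_j$. For a pencil $(\mathbf{A},\mathbf{B})$ with $\mathbf{B}$ symmetric positive definite, the generalized eigenvalues are the $\lambda$ with $\mathbf{A}\mathbf{v}=\lambda\mathbf{B}\mathbf{v}$ for some $\mathbf{v}\neq 0$, and $\kappa(\mathbf{A},\mathbf{B})$ denotes the ratio of the largest to the smallest generalized eigenvalue in absolute value (equal to $\kappa(\mathbf{B}^{-1/2}\mathbf{A}\mathbf{B}^{-1/2})$). *)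

theory Defs
  imports "HOL-Analysis.Analysis" "HOL-Probability.Probability"
begin

definition countsketch :: "('n::finite \<Rightarrow> 's::finite) \<Rightarrow> ('n \<Rightarrow> bool) \<Rightarrow> real^'n^'s" where
  "countsketch h g = (\<chi> i j. if h j = i then (if g j then 1 else -1) else 0)"

definition countsketch_pmf :: "(('n::finite \<Rightarrow> 's::finite) \<times> ('n \<Rightarrow> bool)) pmf" where
  "countsketch_pmf = pmf_of_set UNIV"

definition gen_eigenvalues :: "real^'d^'d \<Rightarrow> real^'d^'d \<Rightarrow> real set" where
  "gen_eigenvalues A B = {\<mu>. \<exists>v. v \<noteq> 0 \<and> A *v v = \<mu> *\<^sub>R (B *v v)}"

definition pencil_kappa :: "real^'d^'d \<Rightarrow> real^'d^'d \<Rightarrow> real" where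
  "pencil_kappa A B = Max (abs ` gen_eigenvalues A B) / Min (abs ` gen_eigenvalues A B)"

definition pos_def :: "real^'d^'d \<Rightarrow> bool" where
  "pos_def B \<longleftrightarrow> transpose B = B \<and> (\<forall>v. v \<noteq> 0 \<longrightarrow> v \<bullet> (B *v v) > 0)"

definition stat_dim :: "real^'d^'n \<Rightarrow> real \<Rightarrow> real" where
  "stat_dim Z lam = trace (matrix_inv (transpose Z ** Z + lam *\<^sub>R mat 1) ** (transpose Z ** Z))"

end

theory Submission
  imports Defs
begin

text \<open>Write A = Z^T Z + lam I and C = S^T S - I, so that the sketched matrix is
  B = A + Z^T C Z. The stacked matrix F = [Z; sqrt lam I] satisfies F^T F = A, and
  R = F A^-1 Z^T satisfies R^T F = Z and Tr(R^T R) = s_lam(Z). Hence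
  v^T (B - A) v = y^T (R C R^T) y with y = F v and |y|^2 = v^T A v, so whenever the Frobenius
  norm of R C R^T is at most 1/3, the quadratic forms of A and B agree up to a factor 1 +- 1/3
  and every generalized eigenvalue of (A, B) lies in [3/4, 3/2]. The off-diagonal entries of C
  are hash collisions with independent random signs, hence pairwise uncorrelated, which gives
  E |R C R^T|_F^2 <= 2 Tr(R^T R)^2 / s, and Markov's inequality concludes.\<close>

lemma transpose_add: "transpose (A + B) = transpose A + transpose (B :: 'a::semiring_1^'n^'m)"
  by (simp add: transpose_def vec_eq_iff)

lemma transpose_diff: "transpose (A - B) = transpose A - transpose (B :: 'a::ring_1^'n^'m)"
  by (simp add: transpose_def vec_eq_iff)

lemma matrix_add_rdistrib: "(A + B) ** C = A ** C + B ** (C :: 'a::semiring_1^'p^'n)"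
  by (vector matrix_matrix_mult_def sum.distrib[symmetric] field_simps)

lemma inner_matrix_vector_transpose:
  fixes R :: "real^'a^'b"
  shows "x \<bullet> (R *v y) = (transpose R *v x) \<bullet> y"
  by (metis dot_lmul_matrix transpose_matrix_vector)

lemma inner_matrix_vector_symmetric:
  fixes M :: "real^'d^'d"
  assumes "transpose M = M"
  shows "x \<bullet> (M *v y) = y \<bullet> (M *v x)"
  using inner_matrix_vector_transpose[of x M y] assms by (simp add: inner_commute)

section \<open>Definite pencils\<close>

lemma linear_plus_quadratic_nonpos_imp_zero:
  fixes a b :: real
  assumes "\<And>t. 2 * t * a + t\<^sup>2 * b \<le> 0"
  shows "a = 0"
proof -
  define c where "c = \<bar>b\<bar> + 1"
  have "c > 0" and "b \<le> c" by (auto simp: c_def)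
  have "(2 * (a / c) * a + (a / c)\<^sup>2 * b) * c\<^sup>2 = a\<^sup>2 * (2 * c + b)"
    using \<open>c > 0\<close> by (simp add: field_simps power2_eq_square)
  moreover have "(2 * (a / c) * a + (a / c)\<^sup>2 * b) * c\<^sup>2 \<le> 0"
    using assms[of "a / c"] by (simp add: mult_nonpos_nonneg)
  moreover have "2 * c + b > 0" by (simp add: c_def)
  ultimately have "a\<^sup>2 \<le> 0" by (simp add: mult_le_0_iff)
  then show ?thesis by simp
qed

text \<open>v maximises the nonpositive form of A - m B, hence lies in its kernel.\<close>
lemma rayleigh_maximizer_gen_eigenvector:
  fixes A B :: "real^'d^'d"
  assumes "transpose A = A" "transpose B = B"
    and le: "\<And>u. u \<bullet> (A *v u) \<le> m * (u \<bullet> (B *v u))"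
    and eq: "v \<bullet> (A *v v) = m * (v \<bullet> (B *v v))"
  shows "A *v v = m *\<^sub>R (B *v v)"
proof -
  define D where "D = A - m *\<^sub>R B"
  have symD: "transpose D = D"
    using assms(1,2) by (simp add: D_def transpose_diff transpose_scalar)
  have form: "u \<bullet> (D *v u) = u \<bullet> (A *v u) - m * (u \<bullet> (B *v u))" for u
    by (simp add: D_def matrix_vector_mult_diff_rdistrib scaleR_matrix_vector_assoc[symmetric]
        inner_diff_right)
  have "w \<bullet> (D *v v) = 0" for w
  proof (rule linear_plus_quadratic_nonpos_imp_zero)
    fix t :: real
    have "(v + t *\<^sub>R w) \<bullet> (D *v (v + t *\<^sub>R w))
        = v \<bullet> (D *v v) + 2 * t * (w \<bullet> (D *v v)) + t\<^sup>2 * (w \<bullet> (D *v w))"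
      using inner_matrix_vector_symmetric[OF symD, of v w]
      by (simp add: matrix_vector_right_distrib matrix_vector_mult_scaleR inner_add_left
          inner_add_right power2_eq_square algebra_simps)
    then show "2 * t * (w \<bullet> (D *v v)) + t\<^sup>2 * (w \<bullet> (D *v w)) \<le> 0"
      using form[of "v + t *\<^sub>R w"] form[of v] le[of "v + t *\<^sub>R w"] eq by simp
  qed
  then have "D *v v = 0" by (metis inner_eq_zero_iff)
  then show ?thesis
    by (simp add: D_def matrix_vector_mult_diff_rdistrib scaleR_matrix_vector_assoc[symmetric])
qed

lemma gen_eigenvalues_nonempty:
  fixes A B :: "real^'d^'d"
  assumes symA: "transpose A = A" and "pos_def B"
  shows "gen_eigenvalues A B \<noteq> {}"
proof -
  have symB: "transpose B = B" and posB: "\<And>v. v \<noteq> 0 \<Longrightarrow> v \<bullet> (B *v v) > 0"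
    using assms(2) by (auto simp: pos_def_def)
  define f where "f v = (v \<bullet> (A *v v)) / (v \<bullet> (B *v v))" for v :: "real^'d"
  let ?S = "sphere (0::real^'d) 1"
  have "continuous_on ?S f"
    unfolding f_def
    by (intro continuous_intros continuous_on_compose2[OF matrix_vector_mult_linear_continuous_on])
       (metis posB norm_zero zero_neq_one less_irrefl mem_sphere_0)
  moreover have "axis undefined 1 \<in> ?S" by simp
  ultimately obtain v where v: "v \<in> ?S" and vmax: "\<And>u. u \<in> ?S \<Longrightarrow> f u \<le> f v"
    using continuous_attains_sup[OF compact_sphere] by (metis empty_iff)
  have "v \<noteq> 0" using v by auto
  have "u \<bullet> (A *v u) \<le> f v * (u \<bullet> (B *v u))" for u
  proof (cases "u = 0")
    case False
    have "f u = f (u /\<^sub>R norm u)"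
      using False by (simp add: f_def matrix_vector_mult_scaleR power2_eq_square)
    also have "\<dots> \<le> f v" using False by (intro vmax) simp
    finally show ?thesis
      using posB[OF False] by (simp add: f_def divide_le_eq mult.commute)
  qed simp
  moreover have "v \<bullet> (A *v v) = f v * (v \<bullet> (B *v v))"
    using posB[OF \<open>v \<noteq> 0\<close>] by (simp add: f_def)
  ultimately have "A *v v = f v *\<^sub>R (B *v v)"
    by (rule rayleigh_maximizer_gen_eigenvector[OF symA symB])
  then show ?thesis using \<open>v \<noteq> 0\<close> unfolding gen_eigenvalues_def by blast
qed

lemma gen_eigenvectors_orthogonal:
  fixes A B :: "real^'d^'d"
  assumes "transpose A = A" "transpose B = B"
    and "A *v v = \<mu> *\<^sub>R (B *v v)" "A *v w = \<nu> *\<^sub>R (B *v w)" "\<mu> \<noteq> \<nu>"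
  shows "v \<bullet> (B *v w) = 0"
proof -
  have "\<mu> * (v \<bullet> (B *v w)) = \<nu> * (v \<bullet> (B *v w))"
    using assms inner_matrix_vector_symmetric[OF assms(1), of v w]
      inner_matrix_vector_symmetric[OF assms(2), of v w] by simp
  then show ?thesis using assms(5) by simp
qed

lemma pos_def_orthogonal_independent:
  fixes B :: "real^'d^'d"
  assumes "pos_def B" and orth: "\<And>v w. v \<in> V \<Longrightarrow> w \<in> V \<Longrightarrow> v \<noteq> w \<Longrightarrow> v \<bullet> (B *v w) = 0"
    and "0 \<notin> V"
  shows "independent V"
proof
  assume "dependent V"
  then obtain a T U where "a \<in> V" "T \<subseteq> V - {a}" and a: "a = (\<Sum>v\<in>T. U v *\<^sub>R v)"
    by (force simp: dependent_def span_explicit)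
  have "a \<bullet> (B *v a) = (\<Sum>v\<in>T. U v * (v \<bullet> (B *v a)))"
    by (subst (1) a) (simp add: inner_sum_left)
  also have "\<dots> = 0"
    using orth \<open>a \<in> V\<close> \<open>T \<subseteq> V - {a}\<close> by (intro sum.neutral) auto
  finally have "a \<bullet> (B *v a) = 0" .
  moreover have "a \<noteq> 0" using assms(3) \<open>a \<in> V\<close> by blast
  then have "a \<bullet> (B *v a) > 0"
    using assms(1) unfolding pos_def_def by blast
  ultimately show False by linarith
qed

lemma gen_eigenvalues_finite:
  fixes A B :: "real^'d^'d"
  assumes symA: "transpose A = A" and pdB: "pos_def B"
  shows "finite (gen_eigenvalues A B)"
proof -
  define vec where "vec \<mu> = (SOME v. v \<noteq> 0 \<and> A *v v = \<mu> *\<^sub>R (B *v v))" for \<mu>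
  have vec: "vec \<mu> \<noteq> 0" "A *v vec \<mu> = \<mu> *\<^sub>R (B *v vec \<mu>)" if "\<mu> \<in> gen_eigenvalues A B" for \<mu>
    using someI_ex[OF that[unfolded gen_eigenvalues_def mem_Collect_eq]] by (auto simp: vec_def)
  have symB: "transpose B = B" and posB: "\<And>v. v \<noteq> 0 \<Longrightarrow> v \<bullet> (B *v v) > 0"
    using pdB by (auto simp: pos_def_def)
  have orth: "vec \<mu> \<bullet> (B *v vec \<nu>) = 0"
    if "\<mu> \<in> gen_eigenvalues A B" "\<nu> \<in> gen_eigenvalues A B" "\<mu> \<noteq> \<nu>" for \<mu> \<nu>
    using gen_eigenvectors_orthogonal[OF symA symB] vec that by blast
  have inj: "inj_on vec (gen_eigenvalues A B)"
  proof (rule inj_onI, rule ccontr)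
    fix \<mu> \<nu> assume "\<mu> \<in> gen_eigenvalues A B" "\<nu> \<in> gen_eigenvalues A B"
      and "vec \<mu> = vec \<nu>" "\<mu> \<noteq> \<nu>"
    then have "vec \<mu> \<bullet> (B *v vec \<mu>) = 0" using orth by metis
    then show False using posB vec(1) \<open>\<mu> \<in> gen_eigenvalues A B\<close> by fastforce
  qed
  have "independent (vec ` gen_eigenvalues A B)"
  proof (rule pos_def_orthogonal_independent[OF pdB])
    fix v w assume "v \<in> vec ` gen_eigenvalues A B" "w \<in> vec ` gen_eigenvalues A B" "v \<noteq> w"
    then obtain \<mu> \<nu> where "\<mu> \<in> gen_eigenvalues A B" "\<nu> \<in> gen_eigenvalues A B" "\<mu> \<noteq> \<nu>"
      and "v = vec \<mu>" "w = vec \<nu>" by blast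
    then show "v \<bullet> (B *v w) = 0" using orth by simp
  next
    show "0 \<notin> vec ` gen_eigenvalues A B" using vec(1) by force
  qed
  then have "finite (vec ` gen_eigenvalues A B)" using independent_bound by blast
  then show ?thesis using inj finite_imageD by blast
qed

lemma forms_close_imp_pos_def:
  fixes A B :: "real^'d^'d"
  assumes "pos_def A" "transpose B = B" "\<epsilon> < 1"
    and close: "\<And>v. \<bar>v \<bullet> (B *v v) - v \<bullet> (A *v v)\<bar> \<le> \<epsilon> * (v \<bullet> (A *v v))"
  shows "pos_def B"
  unfolding pos_def_def
proof (intro conjI allI impI)
  fix v :: "real^'d" assume "v \<noteq> 0"
  then have "v \<bullet> (A *v v) > 0" using assms(1) by (simp add: pos_def_def)
  then have "\<epsilon> * (v \<bullet> (A *v v)) < v \<bullet> (A *v v)" using assms(3) by simp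
  then show "v \<bullet> (B *v v) > 0"
    using close[of v] by (simp add: abs_le_iff)
qed fact

lemma forms_close_imp_gen_eigenvalues_subset:
  fixes A B :: "real^'d^'d"
  assumes "pos_def A" "transpose B = B" "0 \<le> \<epsilon>" "\<epsilon> < 1"
    and close: "\<And>v. \<bar>v \<bullet> (B *v v) - v \<bullet> (A *v v)\<bar> \<le> \<epsilon> * (v \<bullet> (A *v v))"
  shows "gen_eigenvalues A B \<subseteq> {1 / (1 + \<epsilon>) .. 1 / (1 - \<epsilon>)}"
proof
  fix \<mu> assume "\<mu> \<in> gen_eigenvalues A B"
  then obtain v where "v \<noteq> 0" and v: "A *v v = \<mu> *\<^sub>R (B *v v)"
    unfolding gen_eigenvalues_def by blast
  define a b where "a = v \<bullet> (A *v v)" and "b = v \<bullet> (B *v v)"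
  have "a > 0" using assms(1) \<open>v \<noteq> 0\<close> by (simp add: pos_def_def a_def)
  have "b > 0"
    using forms_close_imp_pos_def[OF assms(1,2,4) close] \<open>v \<noteq> 0\<close> by (simp add: pos_def_def b_def)
  have "a = \<mu> * b" using v by (simp add: a_def b_def)
  moreover have "(1 - \<epsilon>) * a \<le> b" "b \<le> (1 + \<epsilon>) * a"
    using close[of v] unfolding a_def[symmetric] b_def[symmetric] by (auto simp: algebra_simps)
  ultimately have "((1 - \<epsilon>) * \<mu>) * b \<le> 1 * b" "1 * b \<le> ((1 + \<epsilon>) * \<mu>) * b"
    by (simp_all add: algebra_simps)
  then have "(1 - \<epsilon>) * \<mu> \<le> 1" "1 \<le> (1 + \<epsilon>) * \<mu>"
    using \<open>b > 0\<close> by (simp_all only: mult_le_cancel_right_pos)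
  then show "\<mu> \<in> {1 / (1 + \<epsilon>) .. 1 / (1 - \<epsilon>)}"
    using assms(3,4) by (simp add: field_simps)
qed

lemma pencil_kappa_le:
  fixes A B :: "real^'d^'d"
  assumes "transpose A = A" "pos_def B" "gen_eigenvalues A B \<subseteq> {a..b}" "0 < a"
  shows "pencil_kappa A B \<le> b / a"
proof -
  let ?E = "abs ` gen_eigenvalues A B"
  have "finite ?E" "?E \<noteq> {}"
    using gen_eigenvalues_finite[OF assms(1,2)] gen_eigenvalues_nonempty[OF assms(1,2)] by auto
  moreover have "?E \<subseteq> {a..b}" using assms(3,4) by auto
  ultimately have "Max ?E \<le> b" "a \<le> Min ?E" "a \<le> b" by auto
  then show ?thesis
    unfolding pencil_kappa_def using assms(4) by (intro frac_le) auto
qed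

section \<open>Whitening the ridge Gram matrix\<close>

lemma ridge_gram_pos_def:
  fixes Z :: "real^'d^'n"
  assumes "lam \<ge> 0" and "lam > 0 \<or> rank Z = CARD('d)"
  shows "pos_def (transpose Z ** Z + lam *\<^sub>R mat 1)"
  unfolding pos_def_def
proof (intro conjI allI impI)
  show "transpose (transpose Z ** Z + lam *\<^sub>R mat 1) = transpose Z ** Z + lam *\<^sub>R mat 1"
    by (simp add: transpose_add matrix_transpose_mul transpose_scalar)
next
  fix v :: "real^'d" assume "v \<noteq> 0"
  have form: "v \<bullet> ((transpose Z ** Z + lam *\<^sub>R mat 1) *v v) = (Z *v v) \<bullet> (Z *v v) + lam * (v \<bullet> v)"
    by (simp add: matrix_vector_mult_add_rdistrib matrix_vector_mul_assoc[symmetric]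
        scaleR_matrix_vector_assoc[symmetric] inner_add_right dot_lmul_matrix[symmetric]
        del: transpose_matrix_vector)
  show "v \<bullet> ((transpose Z ** Z + lam *\<^sub>R mat 1) *v v) > 0"
  proof (cases "lam > 0")
    case True
    then show ?thesis
      unfolding form using \<open>v \<noteq> 0\<close> by (simp add: add_nonneg_pos)
  next
    case False
    then have "inj ((*v) Z)" using assms(2) by (simp add: full_rank_injective)
    then have "Z *v v \<noteq> 0" using \<open>v \<noteq> 0\<close> by (metis injD matrix_vector_mult_0_right)
    then show ?thesis unfolding form using assms(1) by (simp add: add_pos_nonneg)
  qed
qed

lemma pos_def_matrix_inv:
  fixes A :: "real^'d^'d"
  assumes "pos_def A"
  shows "matrix_inv A ** A = mat 1" and "transpose (matrix_inv A) = matrix_inv A"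
proof -
  have "A *v x = 0 \<Longrightarrow> x = 0" for x
    using assms unfolding pos_def_def by (metis inner_zero_right less_irrefl)
  then obtain A' where "A' ** A = mat 1" using matrix_left_invertible_ker by blast
  then have "A ** A' = mat 1 \<and> A' ** A = mat 1" by (simp add: matrix_left_right_inverse)
  then have inv: "A ** matrix_inv A = mat 1 \<and> matrix_inv A ** A = mat 1"
    unfolding matrix_inv_def by (rule someI)
  then show "matrix_inv A ** A = mat 1" by blast
  have "transpose A = A" using assms by (simp add: pos_def_def)
  then have "A ** transpose (matrix_inv A) = mat 1"
    using inv by (metis matrix_transpose_mul transpose_mat)
  then have "matrix_inv A ** (A ** transpose (matrix_inv A)) = matrix_inv A"
    by simp
  then show "transpose (matrix_inv A) = matrix_inv A"
    using inv by (simp add: matrix_mul_assoc)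
qed

text \<open>The stacked matrix [Z; sqrt lam I] factors the regularized Gram matrix and takes the
  role of its square root in the paper.\<close>
definition ridge_augmented :: "real^'d^'n \<Rightarrow> real \<Rightarrow> real^'d^('n + 'd)" where
  "ridge_augmented Z lam =
     (\<chi> m a. case m of Inl j \<Rightarrow> Z $ j $ a | Inr b \<Rightarrow> if a = b then sqrt lam else 0)"

lemma gram_ridge_augmented:
  fixes Z :: "real^'d^'n"
  assumes "lam \<ge> 0"
  shows "transpose (ridge_augmented Z lam) ** ridge_augmented Z lam = transpose Z ** Z + lam *\<^sub>R mat 1"
proof -
  have "(\<Sum>c\<in>UNIV. (if a = c then sqrt lam else 0) * (if b = c then sqrt lam else 0))
      = (if a = b then lam else 0)" for a b :: 'd
    using assms by (simp add: if_distrib[of "\<lambda>x. x * _"] if_distrib[of "\<lambda>x. _ * x"] cong: if_cong)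
  then show ?thesis
    by (simp add: vec_eq_iff matrix_matrix_mult_def transpose_def ridge_augmented_def mat_def
        sum.Plus flip: UNIV_Plus_UNIV)
qed

lemma whitening_factor:
  fixes F :: "real^'d^'m" and Z :: "real^'d^'n"
  assumes "transpose F ** F = A" "G ** A = mat 1" "transpose G = G"
  shows "transpose (F ** G ** transpose Z) ** F = Z"
    and "trace (transpose (F ** G ** transpose Z) ** (F ** G ** transpose Z))
           = trace (G ** (transpose Z ** Z))"
proof -
  have Rt: "transpose (F ** G ** transpose Z) = Z ** G ** transpose F"
    using assms(3) by (simp add: matrix_transpose_mul matrix_mul_assoc)
  show RF: "transpose (F ** G ** transpose Z) ** F = Z"
    unfolding Rt using assms(1,2) by (metis matrix_mul_assoc matrix_mul_rid)
  have "transpose (F ** G ** transpose Z) ** (F ** G ** transpose Z)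
      = (transpose (F ** G ** transpose Z) ** F) ** G ** transpose Z"
    by (simp only: matrix_mul_assoc)
  then have "trace (transpose (F ** G ** transpose Z) ** (F ** G ** transpose Z))
      = trace (Z ** G ** transpose Z)"
    by (simp only: RF)
  also have "\<dots> = trace (G ** (transpose Z ** Z))"
    by (metis matrix_mul_assoc trace_mul_sym)
  finally show "trace (transpose (F ** G ** transpose Z) ** (F ** G ** transpose Z))
           = trace (G ** (transpose Z ** Z))" .
qed

lemma quadratic_form_whitened:
  fixes Z :: "real^'d^'n" and C :: "real^'n^'n"
  assumes "transpose R ** F = Z"
  shows "(Z *v v) \<bullet> (C *v (Z *v v)) = (F *v v) \<bullet> ((R ** C ** transpose R) *v (F *v v))"
proof -
  have "(F *v v) \<bullet> ((R ** C ** transpose R) *v (F *v v))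
      = (F *v v) \<bullet> (R *v (C *v (transpose R *v (F *v v))))"
    by (simp add: matrix_vector_mul_assoc[symmetric] del: transpose_matrix_vector)
  also have "\<dots> = (transpose R *v (F *v v)) \<bullet> (C *v (transpose R *v (F *v v)))"
    by (rule inner_matrix_vector_transpose)
  also have "transpose R *v (F *v v) = Z *v v"
    using assms by (simp add: matrix_vector_mul_assoc del: transpose_matrix_vector)
  finally show ?thesis ..
qed

definition frobenius_sq :: "real^'n^'m \<Rightarrow> real" where
  "frobenius_sq M = (\<Sum>i\<in>UNIV. \<Sum>j\<in>UNIV. (M $ i $ j)\<^sup>2)"

lemma frobenius_sq_nonneg: "frobenius_sq M \<ge> 0"
  by (simp add: frobenius_sq_def sum_nonneg)

lemma quadratic_form_sq_le_frobenius_sq: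
  fixes M :: "real^'n^'n"
  shows "(x \<bullet> (M *v x))\<^sup>2 \<le> frobenius_sq M * (x \<bullet> x)\<^sup>2"
proof -
  have "x \<bullet> (M *v x) = (\<Sum>p\<in>UNIV \<times> UNIV. M $ fst p $ snd p * (x $ fst p * x $ snd p))"
    by (simp add: inner_vec_def matrix_vector_mult_def sum_distrib_left sum.cartesian_product
        case_prod_unfold algebra_simps)
  moreover have "frobenius_sq M = (\<Sum>p\<in>UNIV \<times> UNIV. (M $ fst p $ snd p)\<^sup>2)"
    by (simp add: frobenius_sq_def sum.cartesian_product case_prod_unfold)
  moreover have "(x \<bullet> x)\<^sup>2 = (\<Sum>p\<in>UNIV \<times> UNIV. (x $ fst p * x $ snd p)\<^sup>2)"
    by (simp add: inner_vec_def power2_eq_square sum_product sum.cartesian_product case_prod_unfold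
        algebra_simps)
  ultimately show ?thesis by (simp only: Cauchy_Schwarz_ineq_sum)
qed

lemma quadratic_form_perturbation_le:
  fixes Z :: "real^'d^'n" and C :: "real^'n^'n"
  assumes "transpose F ** F = A" "transpose R ** F = Z"
    and "frobenius_sq (R ** C ** transpose R) \<le> \<epsilon>\<^sup>2" "0 \<le> \<epsilon>"
  shows "\<bar>v \<bullet> ((A + transpose Z ** C ** Z) *v v) - v \<bullet> (A *v v)\<bar> \<le> \<epsilon> * (v \<bullet> (A *v v))"
proof -
  let ?y = "F *v v" and ?M = "R ** C ** transpose R"
  have "v \<bullet> ((A + transpose Z ** C ** Z) *v v) - v \<bullet> (A *v v) = v \<bullet> (transpose Z ** C ** Z *v v)"
    by (simp add: matrix_vector_mult_add_rdistrib inner_add_right)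
  also have "\<dots> = (Z *v v) \<bullet> (C *v (Z *v v))"
    by (simp only: matrix_vector_mul_assoc[symmetric] inner_matrix_vector_transpose transpose_transpose)
  also have "\<dots> = ?y \<bullet> (?M *v ?y)" by (rule quadratic_form_whitened[OF assms(2)])
  finally have diff: "v \<bullet> ((A + transpose Z ** C ** Z) *v v) - v \<bullet> (A *v v) = ?y \<bullet> (?M *v ?y)" .
  have "?y \<bullet> ?y = ((transpose F ** F) *v v) \<bullet> v"
    by (simp only: inner_matrix_vector_transpose matrix_vector_mul_assoc)
  then have yy: "?y \<bullet> ?y = v \<bullet> (A *v v)"
    using assms(1) by (simp add: inner_commute)
  have "(?y \<bullet> (?M *v ?y))\<^sup>2 \<le> frobenius_sq ?M * (?y \<bullet> ?y)\<^sup>2"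
    by (rule quadratic_form_sq_le_frobenius_sq)
  also have "\<dots> \<le> (\<epsilon> * (?y \<bullet> ?y))\<^sup>2"
    using assms(3) by (simp add: power_mult_distrib mult_right_mono)
  finally have "\<bar>?y \<bullet> (?M *v ?y)\<bar> \<le> \<bar>\<epsilon> * (?y \<bullet> ?y)\<bar>"
    by (simp only: abs_le_square_iff)
  then show ?thesis
    unfolding diff using assms(4) by (simp add: abs_mult flip: yy)
qed

lemma pencil_well_conditioned_if_frobenius_small:
  fixes Z :: "real^'d^'n" and C :: "real^'n^'n"
  assumes "pos_def A" "transpose F ** F = A" "transpose R ** F = Z" "transpose C = C"
    and "frobenius_sq (R ** C ** transpose R) \<le> 1/9"
  defines "B \<equiv> A + transpose Z ** C ** Z"
  shows "pos_def B \<and> gen_eigenvalues A B \<subseteq> {1/2 .. 3/2} \<and> pencil_kappa A B \<le> 3"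
proof -
  have symA: "transpose A = A" using assms(1) by (simp add: pos_def_def)
  then have symB: "transpose B = B"
    using assms(4) by (simp add: B_def transpose_add matrix_transpose_mul matrix_mul_assoc)
  have close: "\<bar>v \<bullet> (B *v v) - v \<bullet> (A *v v)\<bar> \<le> 1/3 * (v \<bullet> (A *v v))" for v
    unfolding B_def using assms(2,3,5) by (intro quadratic_form_perturbation_le) (auto simp: power2_eq_square)
  have pdB: "pos_def B"
    by (rule forms_close_imp_pos_def[OF assms(1) symB _ close]) simp
  have "gen_eigenvalues A B \<subseteq> {1 / (1 + 1/3) .. 1 / (1 - 1/3)}"
    by (rule forms_close_imp_gen_eigenvalues_subset[OF assms(1) symB _ _ close]) simp_all
  then have eig: "gen_eigenvalues A B \<subseteq> {3/4 .. 3/2}" by simp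
  have "pencil_kappa A B \<le> (3/2) / (3/4)"
    by (rule pencil_kappa_le[OF symA pdB eig]) simp
  with pdB eig show ?thesis by auto
qed

lemma sketched_ridge_gram_eq:
  fixes Z :: "real^'d^'n" and S :: "real^'n^'s"
  shows "transpose Z ** transpose S ** S ** Z + lam *\<^sub>R mat 1
       = (transpose Z ** Z + lam *\<^sub>R mat 1) + transpose Z ** (transpose S ** S - mat 1) ** Z"
proof -
  have "transpose Z ** transpose S ** S ** Z = transpose Z ** ((transpose S ** S - mat 1) + mat 1) ** Z"
    by (simp add: matrix_mul_assoc)
  also have "\<dots> = transpose Z ** (transpose S ** S - mat 1) ** Z + transpose Z ** Z"
    by (simp only: matrix_add_ldistrib matrix_add_rdistrib matrix_mul_rid)
  finally show ?thesis by (simp add: algebra_simps)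
qed

lemma sketched_pencil_well_conditioned:
  fixes Z :: "real^'d^'n" and S :: "real^'n^'s" and lam :: real
  defines "A \<equiv> transpose Z ** Z + lam *\<^sub>R mat 1"
    and "B \<equiv> transpose Z ** transpose S ** S ** Z + lam *\<^sub>R mat 1"
  assumes "pos_def A" "transpose F ** F = A" "transpose R ** F = Z"
    and "frobenius_sq (R ** (transpose S ** S - mat 1) ** transpose R) \<le> 1/9"
  shows "pos_def B \<and> gen_eigenvalues A B \<subseteq> {1/2 .. 3/2} \<and> pencil_kappa A B \<le> 3"
proof -
  have "transpose (transpose S ** S - mat 1) = transpose S ** S - mat 1"
    by (simp add: transpose_diff matrix_transpose_mul)
  from pencil_well_conditioned_if_frobenius_small[OF assms(3-5) this assms(6)]
  show ?thesis unfolding A_def B_def sketched_ridge_gram_eq .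
qed

section \<open>Second moment of CountSketch\<close>

definition bool_sign :: "bool \<Rightarrow> real" where
  "bool_sign b = (if b then 1 else -1)"

definition collision_sign :: "('n \<Rightarrow> 's) \<times> ('n \<Rightarrow> bool) \<Rightarrow> 'n \<Rightarrow> 'n \<Rightarrow> real" where
  "collision_sign \<omega> j k =
     (if j \<noteq> k \<and> fst \<omega> j = fst \<omega> k then bool_sign (snd \<omega> j) * bool_sign (snd \<omega> k) else 0)"

lemma countsketch_gram_minus_id_entry:
  "(transpose (countsketch h g) ** countsketch h g - mat 1) $ j $ k = collision_sign (h, g) j k"
proof -
  have "(transpose (countsketch h g) ** countsketch h g) $ j $ k
      = (\<Sum>i\<in>UNIV. countsketch h g $ i $ j * countsketch h g $ i $ k)"
    by (simp add: matrix_matrix_mult_def transpose_def)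
  also have "\<dots> = (\<Sum>i\<in>UNIV. if h j = i then (if h k = i then bool_sign (g j) * bool_sign (g k) else 0) else 0)"
    by (intro sum.cong) (auto simp: countsketch_def bool_sign_def)
  also have "\<dots> = (if h k = h j then bool_sign (g j) * bool_sign (g k) else 0)" by simp
  finally show ?thesis by (auto simp: mat_def collision_sign_def bool_sign_def)
qed

lemma integrable_countsketch_pmf [simp]:
  "integrable (measure_pmf countsketch_pmf) (f :: _ \<Rightarrow> real)"
  unfolding countsketch_pmf_def by (rule integrable_measure_pmf_finite) simp

lemma expectation_countsketch_pmf:
  "measure_pmf.expectation (countsketch_pmf :: (('n::finite \<Rightarrow> 's::finite) \<times> ('n \<Rightarrow> bool)) pmf) f
     = (\<Sum>\<omega>\<in>UNIV. f \<omega>) / CARD(('n \<Rightarrow> 's) \<times> ('n \<Rightarrow> bool))"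
  unfolding countsketch_pmf_def by (rule integral_pmf_of_set) simp_all

lemma card_hash_collisions:
  assumes "j \<noteq> k"
  shows "card {h :: 'n::finite \<Rightarrow> 's::finite. h j = h k} * CARD('s) = CARD('n \<Rightarrow> 's)"
proof -
  have "bij_betw (\<lambda>(h, t). h(j := t)) ({h :: 'n \<Rightarrow> 's. h j = h k} \<times> UNIV) UNIV"
    by (rule bij_betw_byWitness[where f' = "\<lambda>h'. (h'(j := h' k), h' j)"])
       (use assms in \<open>auto simp: fun_upd_idem\<close>)
  then have "card ({h :: 'n \<Rightarrow> 's. h j = h k} \<times> (UNIV :: 's set)) = CARD('n \<Rightarrow> 's)"
    by (rule bij_betw_same_card)
  then show ?thesis by (simp add: card_cartesian_product)
qed

lemma expectation_hash_collision:
  assumes "j \<noteq> k"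
  shows "measure_pmf.expectation (countsketch_pmf :: (('n::finite \<Rightarrow> 's::finite) \<times> ('n \<Rightarrow> bool)) pmf)
           (\<lambda>\<omega>. if fst \<omega> j = fst \<omega> k then 1 else 0) = 1 / CARD('s)"
proof -
  have "{\<omega> :: ('n \<Rightarrow> 's) \<times> ('n \<Rightarrow> bool). fst \<omega> j = fst \<omega> k} = {h. h j = h k} \<times> UNIV"
    by auto
  then have "(\<Sum>\<omega>\<in>(UNIV :: (('n \<Rightarrow> 's) \<times> ('n \<Rightarrow> bool)) set). if fst \<omega> j = fst \<omega> k then 1 else 0)
      = real (card {h :: 'n \<Rightarrow> 's. h j = h k}) * CARD('n \<Rightarrow> bool)"
    by (simp add: sum.If_cases card_cartesian_product)
  moreover have "real (card {h :: 'n \<Rightarrow> 's. h j = h k}) * CARD('s) = CARD('n \<Rightarrow> 's)"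
    using card_hash_collisions[OF assms] by (metis of_nat_mult)
  ultimately show ?thesis
    by (simp add: expectation_countsketch_pmf field_simps)
qed

text \<open>Flipping the sign g i negates every product in which i occurs once, so only products
  pairing an off-diagonal entry with itself or with its mirror survive.\<close>
lemma expectation_collision_sign_mult:
  "measure_pmf.expectation (countsketch_pmf :: (('n::finite \<Rightarrow> 's::finite) \<times> ('n \<Rightarrow> bool)) pmf)
     (\<lambda>\<omega>. collision_sign \<omega> j k * collision_sign \<omega> j' k')
   = (if j \<noteq> k \<and> {j', k'} = {j, k} then 1 / CARD('s) else 0)"
proof (cases "{j', k'} = {j, k}")
  case True
  then have "collision_sign \<omega> j' k' = collision_sign \<omega> j k" for \<omega> :: "('n \<Rightarrow> 's) \<times> ('n \<Rightarrow> bool)"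
    by (auto simp: doubleton_eq_iff collision_sign_def)
  then have "collision_sign \<omega> j k * collision_sign \<omega> j' k'
      = (if j \<noteq> k then (if fst \<omega> j = fst \<omega> k then 1 else 0) else 0)" for \<omega> :: "('n \<Rightarrow> 's) \<times> ('n \<Rightarrow> bool)"
    by (simp add: collision_sign_def bool_sign_def)
  then show ?thesis
    using True expectation_hash_collision[of j k, where 's = 's] by simp
next
  case False
  then obtain i where i: "(i = j \<or> i = k) \<noteq> (i = j' \<or> i = k')" by blast
  define flip where "flip \<omega> = (fst \<omega>, (snd \<omega>)(i := \<not> snd \<omega> i))" for \<omega> :: "('n \<Rightarrow> 's) \<times> ('n \<Rightarrow> bool)"
  have flip_sign: "collision_sign (flip \<omega>) a b
      = (if i = a \<or> i = b then - collision_sign \<omega> a b else collision_sign \<omega> a b)" for \<omega> a b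
    by (auto simp: flip_def collision_sign_def bool_sign_def)
  have "(\<Sum>\<omega>\<in>(UNIV :: (('n \<Rightarrow> 's) \<times> ('n \<Rightarrow> bool)) set).
          collision_sign \<omega> j k * collision_sign \<omega> j' k') = 0"
  proof (rule sum_involution_eq_0[where h = flip])
    fix \<omega> :: "('n \<Rightarrow> 's) \<times> ('n \<Rightarrow> bool)"
    show "flip (flip \<omega>) = \<omega>" "flip \<omega> \<noteq> \<omega>"
      by (auto simp: flip_def fun_eq_iff prod_eq_iff)
    show "collision_sign (flip \<omega>) j k * collision_sign (flip \<omega>) j' k'
        + collision_sign \<omega> j k * collision_sign \<omega> j' k' = 0"
      using i by (auto simp: flip_sign)
  qed simp
  then show ?thesis
    using False by (simp add: expectation_countsketch_pmf)
qed

lemma sum_swap_outer_pairs: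
  "(\<Sum>a\<in>A. \<Sum>b\<in>B. \<Sum>c\<in>C. \<Sum>d\<in>D. f a b c d) = (\<Sum>c\<in>C. \<Sum>d\<in>D. \<Sum>a\<in>A. \<Sum>b\<in>B. f a b c d)"
proof -
  have "(\<Sum>a\<in>A. \<Sum>b\<in>B. \<Sum>c\<in>C. \<Sum>d\<in>D. f a b c d) = (\<Sum>a\<in>A. \<Sum>c\<in>C. \<Sum>b\<in>B. \<Sum>d\<in>D. f a b c d)"
    by (rule sum.cong[OF refl], rule sum.swap)
  also have "\<dots> = (\<Sum>c\<in>C. \<Sum>a\<in>A. \<Sum>d\<in>D. \<Sum>b\<in>B. f a b c d)"
    by (subst sum.swap) (rule sum.cong[OF refl], rule sum.cong[OF refl], rule sum.swap)
  also have "\<dots> = (\<Sum>c\<in>C. \<Sum>d\<in>D. \<Sum>a\<in>A. \<Sum>b\<in>B. f a b c d)"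
    by (rule sum.cong[OF refl], rule sum.swap)
  finally show ?thesis .
qed

lemma sum_sum_doubleton_eq:
  fixes f :: "'a::finite \<Rightarrow> 'a \<Rightarrow> real"
  assumes "j \<noteq> k"
  shows "(\<Sum>j'\<in>UNIV. \<Sum>k'\<in>UNIV. if {j', k'} = {j, k} then f j' k' else 0) = f j k + f k j"
proof -
  have "(\<Sum>k'\<in>UNIV. if {j', k'} = {j, k} then f j' k' else 0)
      = (if j' = j then f j k else 0) + (if j' = k then f k j else 0)" for j'
    using assms by (cases "j' = j \<or> j' = k") (auto simp: doubleton_eq_iff)
  then show ?thesis using assms by (simp add: sum.distrib)
qed

lemma expectation_sq_collision_sum:
  fixes a :: "'n::finite \<Rightarrow> 'n \<Rightarrow> real"
  shows "measure_pmf.expectation (countsketch_pmf :: (('n \<Rightarrow> 's::finite) \<times> ('n \<Rightarrow> bool)) pmf)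
           (\<lambda>\<omega>. (\<Sum>j\<in>UNIV. \<Sum>k\<in>UNIV. a j k * collision_sign \<omega> j k)\<^sup>2)
         = (\<Sum>j\<in>UNIV. \<Sum>k\<in>UNIV. if j \<noteq> k then a j k * (a j k + a k j) else 0) / CARD('s)"
proof -
  let ?E = "measure_pmf.expectation (countsketch_pmf :: (('n \<Rightarrow> 's) \<times> ('n \<Rightarrow> bool)) pmf)"
  let ?X = "\<lambda>\<omega>. \<Sum>j'\<in>UNIV. \<Sum>k'\<in>UNIV. a j' k' * collision_sign \<omega> j' k'"
  have cross: "?E (\<lambda>\<omega>. collision_sign \<omega> j k * ?X \<omega>)
      = (if j \<noteq> k then (a j k + a k j) / CARD('s) else 0)" for j k
  proof -
    have "?E (\<lambda>\<omega>. collision_sign \<omega> j k * ?X \<omega>)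
        = (\<Sum>j'\<in>UNIV. \<Sum>k'\<in>UNIV. a j' k' * ?E (\<lambda>\<omega>. collision_sign \<omega> j k * collision_sign \<omega> j' k'))"
      by (simp add: sum_distrib_left mult.left_commute)
    also have "\<dots> = (if j \<noteq> k then (\<Sum>j'\<in>UNIV. \<Sum>k'\<in>UNIV.
                        if {j', k'} = {j, k} then a j' k' / CARD('s) else 0) else 0)"
      by (simp add: expectation_collision_sign_mult if_distrib[of "\<lambda>x. _ * x"] cong: if_cong)
    also have "\<dots> = (if j \<noteq> k then (a j k + a k j) / CARD('s) else 0)"
      by (simp add: sum_sum_doubleton_eq add_divide_distrib)
    finally show ?thesis .
  qed
  have "?E (\<lambda>\<omega>. (?X \<omega>)\<^sup>2) = ?E (\<lambda>\<omega>. \<Sum>j\<in>UNIV. \<Sum>k\<in>UNIV. a j k * (collision_sign \<omega> j k * ?X \<omega>))"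
    by (simp add: power2_eq_square sum_distrib_right mult.assoc)
  also have "\<dots> = (\<Sum>j\<in>UNIV. \<Sum>k\<in>UNIV. a j k * ?E (\<lambda>\<omega>. collision_sign \<omega> j k * ?X \<omega>))"
    by simp
  also have "\<dots> = (\<Sum>j\<in>UNIV. \<Sum>k\<in>UNIV. if j \<noteq> k then a j k * (a j k + a k j) else 0) / CARD('s)"
    by (auto simp: cross sum_divide_distrib intro!: sum.cong)
  finally show ?thesis .
qed

lemma matrix_mul_transpose_entry:
  fixes R :: "real^'n^'m" and C :: "real^'n^'n"
  shows "(R ** C ** transpose R) $ m $ l = (\<Sum>j\<in>UNIV. \<Sum>k\<in>UNIV. R $ m $ j * R $ l $ k * C $ j $ k)"
proof -
  have "(R ** C ** transpose R) $ m $ l = (\<Sum>k\<in>UNIV. (\<Sum>j\<in>UNIV. R $ m $ j * C $ j $ k) * R $ l $ k)"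
    by (simp add: matrix_matrix_mult_def transpose_def)
  also have "\<dots> = (\<Sum>k\<in>UNIV. \<Sum>j\<in>UNIV. R $ m $ j * R $ l $ k * C $ j $ k)"
    by (simp only: sum_distrib_left sum_distrib_right mult_ac)
  finally show ?thesis by (subst sum.swap)
qed

lemma gram_entry_sq_le:
  fixes R :: "real^'n^'m"
  shows "((transpose R ** R) $ j $ k)\<^sup>2 \<le> (transpose R ** R) $ j $ j * (transpose R ** R) $ k $ k"
  using Cauchy_Schwarz_ineq_sum[of "\<lambda>m. R $ m $ j" "\<lambda>m. R $ m $ k" UNIV]
  by (simp add: matrix_matrix_mult_def transpose_def power2_eq_square)

lemma expectation_frobenius_sketch_error:
  fixes R :: "real^'n::finite^'m::finite"
  shows "measure_pmf.expectation (countsketch_pmf :: (('n \<Rightarrow> 's::finite) \<times> ('n \<Rightarrow> bool)) pmf)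
           (\<lambda>(h, g). frobenius_sq (R ** (transpose (countsketch h g) ** countsketch h g - mat 1) ** transpose R))
         \<le> 2 * (trace (transpose R ** R))\<^sup>2 / CARD('s)"
proof -
  let ?E = "measure_pmf.expectation (countsketch_pmf :: (('n \<Rightarrow> 's) \<times> ('n \<Rightarrow> bool)) pmf)"
  let ?P = "transpose R ** R"
  have P: "?P $ j $ k = (\<Sum>m\<in>UNIV. R $ m $ j * R $ m $ k)" for j k
    by (simp add: matrix_matrix_mult_def transpose_def)
  have frob: "frobenius_sq (R ** (transpose (countsketch h g) ** countsketch h g - mat 1) ** transpose R)
      = (\<Sum>m\<in>UNIV. \<Sum>l\<in>UNIV.
           (\<Sum>j\<in>UNIV. \<Sum>k\<in>UNIV. (R $ m $ j * R $ l $ k) * collision_sign (h, g) j k)\<^sup>2)"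
    for h :: "'n \<Rightarrow> 's" and g
    by (simp only: frobenius_sq_def matrix_mul_transpose_entry countsketch_gram_minus_id_entry)
  have "?E (\<lambda>(h, g). frobenius_sq (R ** (transpose (countsketch h g) ** countsketch h g - mat 1) ** transpose R))
      = (\<Sum>m\<in>UNIV. \<Sum>l\<in>UNIV.
           ?E (\<lambda>\<omega>. (\<Sum>j\<in>UNIV. \<Sum>k\<in>UNIV. (R $ m $ j * R $ l $ k) * collision_sign \<omega> j k)\<^sup>2))"
    by (simp add: frob case_prod_unfold)
  also have "\<dots> = (\<Sum>m\<in>UNIV. \<Sum>l\<in>UNIV. \<Sum>j\<in>UNIV. \<Sum>k\<in>UNIV. if j \<noteq> k then
        (R $ m $ j * R $ l $ k) * (R $ m $ j * R $ l $ k + R $ m $ k * R $ l $ j) else 0) / CARD('s)"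
    by (simp add: expectation_sq_collision_sum sum_divide_distrib)
  also have "\<dots> = (\<Sum>j\<in>UNIV. \<Sum>k\<in>UNIV. if j \<noteq> k then ?P $ j $ j * ?P $ k $ k + (?P $ j $ k)\<^sup>2 else 0)
      / CARD('s)"
  proof -
    have "(\<Sum>m\<in>UNIV. \<Sum>l\<in>UNIV. if j \<noteq> k then
        (R $ m $ j * R $ l $ k) * (R $ m $ j * R $ l $ k + R $ m $ k * R $ l $ j) else 0)
      = (if j \<noteq> k then ?P $ j $ j * ?P $ k $ k + (?P $ j $ k)\<^sup>2 else 0)" for j k
      by (simp add: P power2_eq_square sum_product sum.distrib algebra_simps)
    then show ?thesis by (subst sum_swap_outer_pairs) (simp only:)
  qed
  also have "\<dots> \<le> (\<Sum>j\<in>UNIV. \<Sum>k\<in>UNIV. 2 * (?P $ j $ j * ?P $ k $ k)) / CARD('s)"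
  proof (intro divide_right_mono sum_mono)
    fix j k
    have "?P $ i $ i \<ge> 0" for i by (simp add: P sum_nonneg)
    then show "(if j \<noteq> k then ?P $ j $ j * ?P $ k $ k + (?P $ j $ k)\<^sup>2 else 0) \<le> 2 * (?P $ j $ j * ?P $ k $ k)"
      using gram_entry_sq_le[of R j k] by auto
  qed simp
  also have "\<dots> = 2 * (trace ?P)\<^sup>2 / CARD('s)"
  proof -
    have "(trace ?P)\<^sup>2 = (\<Sum>j\<in>UNIV. \<Sum>k\<in>UNIV. ?P $ j $ j * ?P $ k $ k)"
      by (simp add: trace_def power2_eq_square sum_product)
    then show ?thesis by (simp add: sum_distrib_left)
  qed
  finally show ?thesis .
qed

lemma prob_ge_one_minus_Markov:
  fixes M :: "'a pmf" and W :: "'a \<Rightarrow> real"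
  assumes "integrable M W" "\<And>x. W x \<ge> 0" "0 < c" "\<And>x. W x < c \<Longrightarrow> x \<in> G"
  shows "measure_pmf.prob M G \<ge> 1 - measure_pmf.expectation M W / c"
proof -
  let ?bad = "{x \<in> space M. c \<le> W x}"
  have "space M - ?bad \<subseteq> G"
  proof
    fix x assume "x \<in> space M - ?bad"
    then have "W x < c" by auto
    then show "x \<in> G" by (rule assms(4))
  qed
  then have "measure_pmf.prob M (space M - ?bad) \<le> measure_pmf.prob M G"
    by (intro measure_pmf.finite_measure_mono) simp_all
  then have "1 - measure_pmf.prob M ?bad \<le> measure_pmf.prob M G"
    by (subst (asm) measure_pmf.prob_compl) simp_all
  moreover have "measure_pmf.prob M ?bad \<le> measure_pmf.expectation M W / c"
    by (rule integral_Markov_inequality_measure[where A = UNIV]) (use assms(1-3) in auto)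
  ultimately show ?thesis by linarith
qed

theorem lemma3p1:
  fixes Z :: "real^'d::finite^'n::finite" and lam \<delta> :: real
  assumes "lam \<ge> 0"
    and "lam > 0 \<or> rank Z = CARD('d)"
    and "0 < \<delta>" and "\<delta> < 1"
    and "real CARD('s::finite) \<ge> 20 * (stat_dim Z lam)^2 / \<delta>"
  shows "measure_pmf.prob (countsketch_pmf :: (('n \<Rightarrow> 's) \<times> ('n \<Rightarrow> bool)) pmf)
           {(h, g). let S = countsketch h g;
                        A = transpose Z ** Z + lam *\<^sub>R mat 1;
                        B = transpose Z ** transpose S ** S ** Z + lam *\<^sub>R mat 1
                    in pos_def B \<and> gen_eigenvalues A B \<subseteq> {1/2 .. 3/2} \<and> pencil_kappa A B \<le> 3}
         \<ge> 1 - \<delta>"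
proof -
  let ?A = "transpose Z ** Z + lam *\<^sub>R mat 1"
  let ?M = "countsketch_pmf :: (('n \<Rightarrow> 's) \<times> ('n \<Rightarrow> bool)) pmf"
  define F where "F = ridge_augmented Z lam"
  define R where "R = F ** matrix_inv ?A ** transpose Z"
  define W where "W = (\<lambda>(h :: 'n \<Rightarrow> 's, g).
    frobenius_sq (R ** (transpose (countsketch h g) ** countsketch h g - mat 1) ** transpose R))"
  have pdA: "pos_def ?A" using assms(1,2) by (rule ridge_gram_pos_def)
  have FA: "transpose F ** F = ?A" using assms(1) by (simp add: F_def gram_ridge_augmented)
  have RF: "transpose R ** F = Z" and trace_R: "trace (transpose R ** R) = stat_dim Z lam"
    using whitening_factor[OF FA pos_def_matrix_inv[OF pdA]] by (simp_all add: R_def stat_dim_def)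
  have "measure_pmf.expectation ?M W \<le> 2 * (stat_dim Z lam)\<^sup>2 / CARD('s)"
    using expectation_frobenius_sketch_error[of R, where 's = 's] by (simp add: W_def trace_R)
  also have "\<dots> \<le> \<delta> / 10"
    using assms(3,5) by (simp add: field_simps)
  finally have "1 - \<delta> \<le> 1 - measure_pmf.expectation ?M W / (1/9)"
    using assms(3) by simp
  also have "\<dots> \<le> measure_pmf.prob ?M {(h, g). let S = countsketch h g;
                        A = transpose Z ** Z + lam *\<^sub>R mat 1;
                        B = transpose Z ** transpose S ** S ** Z + lam *\<^sub>R mat 1
                    in pos_def B \<and> gen_eigenvalues A B \<subseteq> {1/2 .. 3/2} \<and> pencil_kappa A B \<le> 3}"
    by (rule prob_ge_one_minus_Markov)
       (auto simp: W_def frobenius_sq_nonneg Let_def intro!: sketched_pencil_well_conditioned[OF pdA FA RF])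
  finally show ?thesis .
qed

end
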